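(* For every natural number $l$, the double subdivided star $T_{l,l}$ exhibits pretty good state transfer between its two coalescence vertices $a$ and $b$ with respect to a sequence in $(4\mathbb{Z}-1)\frac{\pi}{2}$; that is, there is a sequence $(\tau_k)$ with each $\tau_k\in\{(4n-1)\pi/2: n\in\mathbb{Z}\}$ and some $\gamma\in\mathbb{C}$ such that $\lim_{k\to\infty}U(\tau_k)\mathbf{e}_a=\gamma\mathbf{e}_b$.
   Context: A subdivided star $SK_{1,l}$ is obtained by identifying exactly one pendant (end) vertex from each of $l$ copies of the path $P_3$; the identified vertex is the coalescence vertex. The double subdivided star $T_{l,m}$ is obtained from $SK_{1,l}$ and $SK_{1,m}$ by adding one edge joining their two coalescence vertices; in $T_{l,l}$ these are the two vertices of degree $l+1$ joined by that edge (for $l=1$, the two middle vertices of the path $P_6$). For a graph with adjacency matrix $A$, $U(t)=\exp(itA)$, $t\in\mathbb{R}$, and $\mathbf{e}_a$ is the standard basis vector of vertex $a$. Pretty good state transfer between distinct vertices $a,b$ means there exist real $\tau_k$ and $\gamma\in\mathbb{C}$ with $\lim_{k\to\infty}U(\tau_k)\mathbf{e}_a=\gamma\mathbf{e}_b$. *)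

theory Defs
  imports "HOL-Analysis.Analysis"
begin

text \<open>Graphs on a finite vertex set V with adjacency matrix given as a function
  A :: 'v => 'v => complex (entries outside V are irrelevant).\<close>

fun mat_pow :: "'v set \<Rightarrow> ('v \<Rightarrow> 'v \<Rightarrow> complex) \<Rightarrow> nat \<Rightarrow> 'v \<Rightarrow> 'v \<Rightarrow> complex" where
  "mat_pow V A 0 x y = (if x = y then 1 else 0)"
| "mat_pow V A (Suc n) x y = (\<Sum>z\<in>V. A x z * mat_pow V A n z y)"

definition trans_mat :: "'v set \<Rightarrow> ('v \<Rightarrow> 'v \<Rightarrow> complex) \<Rightarrow> real \<Rightarrow> 'v \<Rightarrow> 'v \<Rightarrow> complex" where
  "trans_mat V A t x y = (\<Sum>n. (\<i> * complex_of_real t) ^ n / fact n * mat_pow V A n x y)"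

text \<open>U(t) e_a as a vector indexed by V: its y-entry is U(t)_{y,a}.
  Convergence of vectors in the finite-dimensional space C^V is entrywise convergence.\<close>
definition pgst_along :: "'v set \<Rightarrow> ('v \<Rightarrow> 'v \<Rightarrow> complex) \<Rightarrow> 'v \<Rightarrow> 'v \<Rightarrow> (nat \<Rightarrow> real) \<Rightarrow> complex \<Rightarrow> bool" where
  "pgst_along V A a b \<tau> \<gamma> \<longleftrightarrow>
     (\<forall>y\<in>V. (\<lambda>k. trans_mat V A (\<tau> k) y a) \<longlonglongrightarrow> (if y = b then \<gamma> else 0))"

text \<open>Vertices of the double subdivided star T_{l,m}: side False/True,
  coalescence vertex Cen s, and for each branch i the middle vertex Mid s i
  and the pendant vertex Leaf s i (each branch is a copy of P_3: Cen - Mid - Leaf).\<close>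
datatype dsvtx = Cen bool | Mid bool nat | Leaf bool nat

definition dss_vertices :: "nat \<Rightarrow> nat \<Rightarrow> dsvtx set" where
  "dss_vertices l m = {Cen False, Cen True}
     \<union> {Mid False i | i. i < l} \<union> {Leaf False i | i. i < l}
     \<union> {Mid True i | i. i < m} \<union> {Leaf True i | i. i < m}"

fun dss_edge :: "dsvtx \<Rightarrow> dsvtx \<Rightarrow> bool" where
  "dss_edge (Cen s) (Cen s') = (s \<noteq> s')"
| "dss_edge (Cen s) (Mid s' i) = (s = s')"
| "dss_edge (Mid s i) (Cen s') = (s = s')"
| "dss_edge (Mid s i) (Leaf s' j) = (s = s' \<and> i = j)"
| "dss_edge (Leaf s i) (Mid s' j) = (s = s' \<and> i = j)"
| "dss_edge _ _ = False"

definition dss_adj :: "nat \<Rightarrow> nat \<Rightarrow> dsvtx \<Rightarrow> dsvtx \<Rightarrow> complex" where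
  "dss_adj l m x y =
     (if x \<in> dss_vertices l m \<and> y \<in> dss_vertices l m \<and> dss_edge x y then 1 else 0)"

end

theory Submission
  imports Defs
begin

(* The vector e_a is a combination of six eigenvectors of T_{l,l}: for each of the three
   roots x of x^3 - x^2 - (l+1) x + 1 (all real, irrational, summing to 1), one eigenvector
   that is symmetric under exchanging the two halves of the tree, with eigenvalue x, and an
   antisymmetric one with eigenvalue -x. Flipping the sign of the antisymmetric part turns
   e_a into e_b. Hence U(t) e_a tends to i e_b as soon as e^{i t x} tends to i for all three
   roots, because e^{-i t x} then tends to -i. For t = (4K - 1) pi/2 this asks that
   K x - (x + 1)/4 approach the integers for every root x. Since 1 and two of the roots are
   linearly independent over Q, Kronecker's theorem provides such K for these two roots, and
   the third root 1 - x - y follows because e^{i t} = -i. *)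

section \<open>Spectral expansion of the transition matrix\<close>

lemma mat_pow_eigen_expansion:
  fixes A :: "'v \<Rightarrow> 'v \<Rightarrow> complex" and v :: "'j \<Rightarrow> 'v \<Rightarrow> complex"
  assumes eigen: "\<And>j y. j \<in> J \<Longrightarrow> y \<in> V \<Longrightarrow> (\<Sum>z\<in>V. A y z * v j z) = \<mu> j * v j y"
    and expansion: "\<And>y. y \<in> V \<Longrightarrow> (\<Sum>j\<in>J. c j * v j y) = (if y = a then 1 else 0)"
    and "y \<in> V"
  shows "mat_pow V A n y a = (\<Sum>j\<in>J. c j * \<mu> j ^ n * v j y)"
  using \<open>y \<in> V\<close>
proof (induction n arbitrary: y)
  case 0
  then show ?case by (simp add: expansion)
next
  case (Suc n)
  have "mat_pow V A (Suc n) y a = (\<Sum>z\<in>V. A y z * (\<Sum>j\<in>J. c j * \<mu> j ^ n * v j z))"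
    by (simp add: Suc.IH)
  also have "\<dots> = (\<Sum>j\<in>J. c j * \<mu> j ^ n * (\<Sum>z\<in>V. A y z * v j z))"
    by (simp add: sum_distrib_left sum.swap[of _ V] mult_ac)
  also have "\<dots> = (\<Sum>j\<in>J. c j * \<mu> j ^ Suc n * v j y)"
    by (rule sum.cong) (simp_all add: eigen Suc.prems)
  finally show ?case .
qed

lemma trans_mat_eigen_expansion:
  fixes A :: "'v \<Rightarrow> 'v \<Rightarrow> complex" and v :: "'j \<Rightarrow> 'v \<Rightarrow> complex"
  assumes eigen: "\<And>j y. j \<in> J \<Longrightarrow> y \<in> V \<Longrightarrow> (\<Sum>z\<in>V. A y z * v j z) = \<mu> j * v j y"
    and expansion: "\<And>y. y \<in> V \<Longrightarrow> (\<Sum>j\<in>J. c j * v j y) = (if y = a then 1 else 0)"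
    and "y \<in> V"
  shows "trans_mat V A t y a = (\<Sum>j\<in>J. c j * exp (\<i> * of_real t * \<mu> j) * v j y)"
proof -
  have "(\<lambda>n. (\<i> * of_real t * \<mu> j) ^ n /\<^sub>R fact n * (c j * v j y))
          sums (exp (\<i> * of_real t * \<mu> j) * (c j * v j y))" for j
    by (rule sums_mult2[OF exp_converges])
  then have "(\<lambda>n. \<Sum>j\<in>J. (\<i> * of_real t * \<mu> j) ^ n /\<^sub>R fact n * (c j * v j y))
          sums (\<Sum>j\<in>J. c j * exp (\<i> * of_real t * \<mu> j) * v j y)"
    by (intro sums_sum) (simp add: mult_ac)
  moreover have "(\<i> * of_real t) ^ n / fact n * mat_pow V A n y a
      = (\<Sum>j\<in>J. (\<i> * of_real t * \<mu> j) ^ n /\<^sub>R fact n * (c j * v j y))" for n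
    by (simp add: mat_pow_eigen_expansion[OF eigen expansion \<open>y \<in> V\<close>] sum_distrib_left
        scaleR_conv_of_real power_mult_distrib divide_inverse mult_ac)
  ultimately show ?thesis
    unfolding trans_mat_def by (simp add: sums_unique[symmetric])
qed

section \<open>Cubics and divided differences\<close>

lemma divided_difference_quadratic:
  fixes a b c :: real
  assumes "a \<noteq> b" "a \<noteq> c" "b \<noteq> c"
  shows "(\<Sum>x\<in>{a, b, c}. 1 / (\<Prod>z\<in>{a, b, c} - {x}. x - z) * (\<alpha> * x\<^sup>2 + \<beta> * x + \<gamma>)) = \<alpha>"
proof -
  have "{a, b, c} - {a} = {b, c}" "{a, b, c} - {b} = {a, c}" "{a, b, c} - {c} = {a, b}"
    using assms by auto
  then have "(\<Sum>x\<in>{a, b, c}. 1 / (\<Prod>z\<in>{a, b, c} - {x}. x - z) * (\<alpha> * x\<^sup>2 + \<beta> * x + \<gamma>))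
      = (\<alpha> * a\<^sup>2 + \<beta> * a + \<gamma>) / ((a - b) * (a - c)) + (\<alpha> * b\<^sup>2 + \<beta> * b + \<gamma>) / ((b - a) * (b - c))
        + (\<alpha> * c\<^sup>2 + \<beta> * c + \<gamma>) / ((c - a) * (c - b))"
    using assms by simp
  also have "\<dots> = \<alpha>"
  proof -
    have "a - b \<noteq> 0" "a - c \<noteq> 0" "b - c \<noteq> 0" "b - a \<noteq> 0" "c - a \<noteq> 0" "c - b \<noteq> 0"
      using assms by auto
    then show ?thesis
      by (simp add: divide_simps) (simp add: algebra_simps power2_eq_square)
  qed
  finally show ?thesis .
qed

lemma monic_cubic_distinct_roots_sum:
  fixes b c d x y z :: "'a :: idom"
  assumes roots: "x ^ 3 + b * x\<^sup>2 + c * x + d = 0" "y ^ 3 + b * y\<^sup>2 + c * y + d = 0"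
      "z ^ 3 + b * z\<^sup>2 + c * z + d = 0"
    and distinct: "x \<noteq> y" "x \<noteq> z" "y \<noteq> z"
  shows "x + y + z = - b"
proof -
  have factor: "(u - v) * (u\<^sup>2 + u * v + v\<^sup>2 + b * (u + v) + c)
      = (u ^ 3 + b * u\<^sup>2 + c * u + d) - (v ^ 3 + b * v\<^sup>2 + c * v + d)" for u v
    by (simp add: algebra_simps power2_eq_square power3_eq_cube)
  have "(y - z) * (x + y + z + b)
      = (x\<^sup>2 + x * y + y\<^sup>2 + b * (x + y) + c) - (x\<^sup>2 + x * z + z\<^sup>2 + b * (x + z) + c)"
    by (simp add: algebra_simps power2_eq_square)
  also have "\<dots> = 0"
    using factor[of x y] factor[of x z] roots distinct by simp
  finally have "(y - z) * (x + y + z + b) = 0" .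
  then show ?thesis
    using distinct by (simp add: eq_neg_iff_add_eq_0)
qed

lemma irrational_rat_linear_eq_0:
  fixes x u v :: real
  assumes "x \<notin> \<rat>" "u \<in> \<rat>" "v \<in> \<rat>" "u * x + v = 0"
  shows "u = 0 \<and> v = 0"
proof (cases "u = 0")
  case False
  with assms(4) have "x = - v / u"
    by (simp add: field_simps eq_neg_iff_add_eq_0)
  with assms(1-3) show ?thesis
    by simp
qed (use assms in simp)

lemma monic_cubic_root_rat_quadratic_eq_0:
  fixes b c d x :: real
  assumes coeffs: "b \<in> \<rat>" "c \<in> \<rat>" "d \<in> \<rat>"
    and no_rat_root: "\<And>r. r \<in> \<rat> \<Longrightarrow> r ^ 3 + b * r\<^sup>2 + c * r + d \<noteq> 0"
    and root: "x ^ 3 + b * x\<^sup>2 + c * x + d = 0"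
    and quadratic: "a2 \<in> \<rat>" "a1 \<in> \<rat>" "a0 \<in> \<rat>" "a2 * x\<^sup>2 + a1 * x + a0 = 0"
  shows "a2 = 0 \<and> a1 = 0 \<and> a0 = 0"
proof -
  have irrational: "x \<notin> \<rat>"
    using no_rat_root root by blast
  show ?thesis
  proof (cases "a2 = 0")
    case True
    then show ?thesis
      using irrational_rat_linear_eq_0[OF irrational, of a1 a0] quadratic by simp
  next
    case False
    define \<beta> \<gamma> where "\<beta> = a1 / a2" and "\<gamma> = a0 / a2"
    have rat: "\<beta> \<in> \<rat>" "\<gamma> \<in> \<rat>"
      using quadratic by (simp_all add: \<beta>_def \<gamma>_def)
    have monic: "x\<^sup>2 + \<beta> * x + \<gamma> = 0"
      using quadratic(4) False by (simp add: \<beta>_def \<gamma>_def field_simps)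
    \<comment> \<open>The remainder of the division by the quadratic vanishes at the irrational x,
      hence identically, and then the rational number \<beta> - b is a root of the cubic.\<close>
    have division: "t ^ 3 + b * t\<^sup>2 + c * t + d = (t\<^sup>2 + \<beta> * t + \<gamma>) * (t + b - \<beta>)
        + (c - \<gamma> - \<beta> * (b - \<beta>)) * t + (d - \<gamma> * (b - \<beta>))" for t
      by (simp add: algebra_simps power2_eq_square power3_eq_cube)
    have "(c - \<gamma> - \<beta> * (b - \<beta>)) * x + (d - \<gamma> * (b - \<beta>)) = 0"
      using division[of x] root monic by simp
    then have "c - \<gamma> - \<beta> * (b - \<beta>) = 0 \<and> d - \<gamma> * (b - \<beta>) = 0"
      by (intro irrational_rat_linear_eq_0[OF irrational]) (use coeffs rat in simp_all)
    then have "(\<beta> - b) ^ 3 + b * (\<beta> - b)\<^sup>2 + c * (\<beta> - b) + d = 0"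
      using division[of "\<beta> - b"] by simp
    moreover have "\<beta> - b \<in> \<rat>"
      using rat coeffs by simp
    ultimately show ?thesis
      using no_rat_root by blast
  qed
qed

section \<open>Phases and Kronecker's theorem\<close>

lemma exp_tendsto_i_of_approx:
  fixes K m :: "nat \<Rightarrow> int"
  assumes "(\<lambda>k. of_int (K k) * x - of_int (m k) - (x + 1) / 4) \<longlonglongrightarrow> 0"
  shows "(\<lambda>k. exp (\<i> * of_real ((4 * of_int (K k) - 1) * pi / 2 * x))) \<longlonglongrightarrow> \<i>"
proof -
  define d where "d k = of_int (K k) * x - of_int (m k) - (x + 1) / 4" for k
  have "exp (\<i> * of_real ((4 * of_int (K k) - 1) * pi / 2 * x)) = cis (2 * pi * d k) * \<i>" for k
  proof -
    have "(4 * of_int (K k) - 1) * pi / 2 * x = 2 * pi * d k + 2 * pi * of_int (m k) + pi / 2"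
      by (simp add: d_def field_simps)
    then have "exp (\<i> * of_real ((4 * of_int (K k) - 1) * pi / 2 * x))
        = cis (2 * pi * d k + 2 * pi * of_int (m k) + pi / 2)"
      by (simp only: cis_conv_exp)
    also have "\<dots> = cis (2 * pi * d k) * cis (2 * pi * of_int (m k)) * cis (pi / 2)"
      by (simp only: cis_mult)
    finally show ?thesis
      by simp
  qed
  moreover have "(\<lambda>k. cis (2 * pi * d k) * \<i>) \<longlonglongrightarrow> cis (2 * pi * 0) * \<i>"
    using assms unfolding d_def[symmetric] by (intro tendsto_intros)
  ultimately show ?thesis
    by simp
qed

lemma exp_tendsto_i_complement:
  assumes "\<And>k. exp (\<i> * of_real (\<tau> k)) = - \<i>"
    and "(\<lambda>k. exp (\<i> * of_real (\<tau> k * x))) \<longlonglongrightarrow> \<i>"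
    and "(\<lambda>k. exp (\<i> * of_real (\<tau> k * y))) \<longlonglongrightarrow> \<i>"
  shows "(\<lambda>k. exp (\<i> * of_real (\<tau> k * (1 - x - y)))) \<longlonglongrightarrow> \<i>"
proof -
  have "\<i> * of_real (\<tau> k * (1 - x - y))
      = \<i> * of_real (\<tau> k) - \<i> * of_real (\<tau> k * x) - \<i> * of_real (\<tau> k * y)" for k
    by (simp add: algebra_simps)
  then have "exp (\<i> * of_real (\<tau> k * (1 - x - y)))
      = - \<i> / exp (\<i> * of_real (\<tau> k * x)) / exp (\<i> * of_real (\<tau> k * y))" for k
    by (simp only: exp_diff assms(1))
  moreover have "(\<lambda>k. - \<i> / exp (\<i> * of_real (\<tau> k * x)) / exp (\<i> * of_real (\<tau> k * y)))
      \<longlonglongrightarrow> - \<i> / \<i> / \<i>"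
    using assms(2,3) by (intro tendsto_intros) auto
  ultimately show ?thesis
    by simp
qed

lemma exp_i_three_quarter_turn:
  "exp (\<i> * of_real ((4 * of_int n - 1) * pi / 2)) = - \<i>"
proof -
  have "(4 * of_int n - 1) * pi / 2 = 2 * pi * of_int n + - (pi / 2)"
    by (simp add: field_simps)
  then have "exp (\<i> * of_real ((4 * of_int n - 1) * pi / 2)) = cis (2 * pi * of_int n) * cis (- (pi / 2))"
    by (simp only: cis_conv_exp[symmetric] cis_mult)
  then show ?thesis
    by simp
qed

lemma Kronecker_pair_sequence:
  fixes x y a b :: real
  assumes indep: "\<And>A B C :: int. of_int A * x + of_int B * y + of_int C = 0 \<Longrightarrow> A = 0 \<and> B = 0 \<and> C = 0"
  obtains K m n :: "nat \<Rightarrow> int"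
  where "(\<lambda>k. of_int (K k) * x - of_int (m k) - a) \<longlonglongrightarrow> 0"
    and "(\<lambda>k. of_int (K k) * y - of_int (n k) - b) \<longlonglongrightarrow> 0"
proof -
  interpret int_module: Modules.module "\<lambda>r. (*) (real_of_int r)"
    by (simp add: Modules.module.intro distrib_left mult.commute)
  have distinct: "x \<noteq> y" "x \<noteq> 1" "y \<noteq> 1"
    using indep[of 1 "-1" 0] indep[of 1 0 "-1"] indep[of 0 1 "-1"] by auto
  define \<theta> :: "nat \<Rightarrow> real" where "\<theta> i = (if i = 0 then x else if i = 1 then y else 1)" for i
  define \<alpha> :: "nat \<Rightarrow> real" where "\<alpha> i = (if i = 0 then a else b)" for i
  have atMost_2: "{..2::nat} = {0, 1, 2}"
    by auto
  have \<theta>_image: "\<theta> ` {..2} = {x, y, 1}"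
    by (auto simp: atMost_2 \<theta>_def)
  have "inj_on \<theta> {..2}"
    using distinct by (simp add: atMost_2 \<theta>_def inj_on_def)
  moreover have "int_module.independent (\<theta> ` {..2})"
  proof
    assume "int_module.dependent (\<theta> ` {..2})"
    then obtain u :: "real \<Rightarrow> int" where "u x \<noteq> 0 \<or> u y \<noteq> 0 \<or> u 1 \<noteq> 0"
      and "of_int (u x) * x + of_int (u y) * y + of_int (u 1) = 0"
      using distinct by (auto simp: \<theta>_image int_module.dependent_finite add.assoc)
    with indep show False
      by blast
  qed
  moreover have "\<theta> 2 = 1"
    by (simp add: \<theta>_def)
  ultimately have "\<exists>k m. \<forall>i<2. \<bar>of_int k * \<theta> i - of_int (m i) - \<alpha> i\<bar> < 1 / real (Suc j)" for j
    by (metis Kronecker_thm_2 of_nat_0_less_iff zero_less_Suc zero_less_divide_1_iff)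
  then obtain K M where KM: "\<And>j i. i < 2 \<Longrightarrow> \<bar>of_int (K j) * \<theta> i - of_int (M j i) - \<alpha> i\<bar> < 1 / real (Suc j)"
    by metis
  have "(\<lambda>j. of_int (K j) * \<theta> i - of_int (M j i) - \<alpha> i) \<longlonglongrightarrow> 0" if "i < 2" for i
    by (rule LIMSEQ_norm_0) (use KM[OF that] in \<open>simp add: less_imp_le\<close>)
  from this[of 0] this[of 1] show ?thesis
    by (intro that[of K "\<lambda>j. M j 0" "\<lambda>j. M j 1"]) (simp_all add: \<theta>_def \<alpha>_def)
qed

section \<open>The roots of the characteristic polynomial\<close>

(* The characteristic polynomial of the quotient matrix [[1, l, 0], [1, 0, 1], [0, 1, 0]] of T_{l,l}
   for the partition of its vertices into centres, middle vertices and leaves. *)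
definition dss_poly :: "nat \<Rightarrow> real \<Rightarrow> real" where
  "dss_poly l x = x ^ 3 - x\<^sup>2 - (real l + 1) * x + 1"

lemma dss_poly_three_roots:
  assumes "l \<ge> 1"
  obtains x y z where "x < y" "y < z" "dss_poly l x = 0" "dss_poly l y = 0" "dss_poly l z = 0"
proof -
  define M where "M = real l + 2"
  have cont: "continuous_on S (dss_poly l)" for S
    unfolding dss_poly_def by (intro continuous_intros)
  have "dss_poly l (- M) = - (M ^ 3 + M - 1)"
    by (simp add: dss_poly_def M_def algebra_simps power2_eq_square power3_eq_cube)
  moreover have "M ^ 3 + M - 1 \<ge> 0"
    by (simp add: M_def)
  ultimately have neg: "dss_poly l (- M) \<le> 0"
    by linarith
  have "dss_poly l M = M * (M - 1)\<^sup>2 + 1"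
    by (simp add: dss_poly_def M_def algebra_simps power2_eq_square power3_eq_cube)
  then have pos: "dss_poly l M \<ge> 0"
    by (simp add: M_def)
  have at_0: "dss_poly l 0 = 1" and at_1: "dss_poly l 1 = - real l"
    by (simp_all add: dss_poly_def)
  obtain x where x: "- M \<le> x" "x \<le> 0" "dss_poly l x = 0"
    using IVT'[of "dss_poly l" "- M" 0 0] neg at_0 cont by (auto simp: M_def)
  obtain y where y: "0 \<le> y" "y \<le> 1" "dss_poly l y = 0"
    using IVT2'[of "dss_poly l" 1 0 0] at_0 at_1 cont by auto
  obtain z where z: "1 \<le> z" "z \<le> M" "dss_poly l z = 0"
    using IVT'[of "dss_poly l" 1 0 M] pos at_1 cont by (auto simp: M_def)
  have "x \<noteq> 0" "y \<noteq> 0" "y \<noteq> 1" "z \<noteq> 1"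
    using x y z at_0 at_1 assms by auto
  with x y z show ?thesis
    by (intro that[of x y z]) auto
qed

lemma dss_poly_no_rational_root:
  assumes "l \<ge> 1" and "x \<in> \<rat>"
  shows "dss_poly l x \<noteq> 0"
proof
  assume root: "dss_poly l x = 0"
  obtain a b :: int where ab: "b > 0" "coprime a b" "x = of_int a / of_int b"
    using Rats_cases'[OF \<open>x \<in> \<rat>\<close>] by blast
  have "real_of_int b ^ 3 * dss_poly l x = of_int (a ^ 3 - a\<^sup>2 * b - (int l + 1) * a * b\<^sup>2 + b ^ 3)"
    using ab(1) by (simp add: dss_poly_def ab(3) field_simps power3_eq_cube power2_eq_square)
  with root have cleared: "a ^ 3 - a\<^sup>2 * b - (int l + 1) * a * b\<^sup>2 + b ^ 3 = 0"
    by (metis of_int_eq_0_iff mult_zero_right)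
  then have "a ^ 3 = b * (a\<^sup>2 + (int l + 1) * a * b - b\<^sup>2)"
    by (simp add: algebra_simps power2_eq_square power3_eq_cube)
  then have "b dvd a ^ 3"
    by simp
  with \<open>coprime a b\<close> have "b = 1"
    using \<open>b > 0\<close> coprime_absorb_right[of b "a ^ 3"] by simp
  with cleared have "a * (int l + 1 + a - a\<^sup>2) = 1"
    by (simp add: algebra_simps power2_eq_square power3_eq_cube)
  then have "a = 1 \<or> a = - 1"
    using zmult_eq_1_iff[of a] by metis
  then show False
    using \<open>a * (int l + 1 + a - a\<^sup>2) = 1\<close> \<open>l \<ge> 1\<close> by auto
qed

lemma dss_poly_root_rat_quadratic_eq_0:
  assumes "l \<ge> 1" and "dss_poly l x = 0"
    and "a2 \<in> \<rat>" "a1 \<in> \<rat>" "a0 \<in> \<rat>" "a2 * x\<^sup>2 + a1 * x + a0 = 0"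
  shows "a2 = 0 \<and> a1 = 0 \<and> a0 = 0"
proof (rule monic_cubic_root_rat_quadratic_eq_0[where b = "- 1" and c = "- (real l + 1)" and d = 1])
  show "r ^ 3 + - 1 * r\<^sup>2 + - (real l + 1) * r + 1 \<noteq> 0" if "r \<in> \<rat>" for r
    using dss_poly_no_rational_root[OF \<open>l \<ge> 1\<close> that] by (simp add: dss_poly_def algebra_simps)
  show "x ^ 3 + - 1 * x\<^sup>2 + - (real l + 1) * x + 1 = 0"
    using \<open>dss_poly l x = 0\<close> by (simp add: dss_poly_def algebra_simps)
qed (use assms in simp_all)

(* The hypotheses say that the coefficients of dss_poly l (q + r t) - r^3 dss_poly l t,
   a quadratic in t, vanish. *)
lemma dss_poly_affine_coefficients_eq_0:
  fixes q r :: real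
  assumes l: "l \<ge> 1" and "r \<noteq> 0"
    and a2: "r\<^sup>2 * (3 * q - 1 + r) = 0"
    and a1: "r * (3 * q\<^sup>2 - 2 * q - (real l + 1) + r\<^sup>2 * (real l + 1)) = 0"
    and a0: "q ^ 3 - q\<^sup>2 - (real l + 1) * q + 1 - r ^ 3 = 0"
  shows "q = 0 \<and> r = 1"
proof -
  from a2 \<open>r \<noteq> 0\<close> have r: "r = 1 - 3 * q"
    by simp
  from a1 \<open>r \<noteq> 0\<close> have "3 * q\<^sup>2 - 2 * q - (real l + 1) + r\<^sup>2 * (real l + 1) = 0"
    by simp
  then have "q * (3 * q - 2) * (3 * real l + 4) = 0"
    unfolding r by (simp add: algebra_simps power2_eq_square)
  with l have "q = 0 \<or> q = 2 / 3"
    by auto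
  moreover have "q \<noteq> 2 / 3"
  proof
    assume q: "q = 2 / 3"
    with r have "r = - 1"
      by simp
    with q a0 have "(2 / 3) ^ 3 - (2 / 3)\<^sup>2 - (real l + 1) * (2 / 3) + 1 - (- 1) ^ 3 = (0 :: real)"
      by (simp only:)
    then have "real (9 * l + 9) = real 25"
      by (simp add: power2_eq_square power3_eq_cube)
    then have "9 * l + 9 = 25"
      by (simp only: of_nat_eq_iff)
    then show False
      by presburger
  qed
  ultimately show ?thesis
    using r by simp
qed

lemma dss_poly_roots_not_rat_affine:
  assumes l: "l \<ge> 1" and x: "dss_poly l x = 0" and y: "dss_poly l y = 0" and "x \<noteq> y"
    and "q \<in> \<rat>" "r \<in> \<rat>"
  shows "y \<noteq> q + r * x"
proof
  assume y_eq: "y = q + r * x"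
  define a2 where "a2 = r\<^sup>2 * (3 * q - 1 + r)"
  define a1 where "a1 = r * (3 * q\<^sup>2 - 2 * q - (real l + 1) + r\<^sup>2 * (real l + 1))"
  define a0 where "a0 = q ^ 3 - q\<^sup>2 - (real l + 1) * q + 1 - r ^ 3"
  have "dss_poly l (q + r * x) - r ^ 3 * dss_poly l x = a2 * x\<^sup>2 + a1 * x + a0"
    by (simp add: dss_poly_def a2_def a1_def a0_def algebra_simps power2_eq_square power3_eq_cube)
  with x y y_eq have "a2 * x\<^sup>2 + a1 * x + a0 = 0"
    by simp
  moreover have "a2 \<in> \<rat>" "a1 \<in> \<rat>" "a0 \<in> \<rat>"
    using \<open>q \<in> \<rat>\<close> \<open>r \<in> \<rat>\<close> by (simp_all add: a2_def a1_def a0_def)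
  ultimately have "a2 = 0" "a1 = 0" "a0 = 0"
    using dss_poly_root_rat_quadratic_eq_0[OF l x] by blast+
  moreover have "r \<noteq> 0"
    using dss_poly_no_rational_root[OF l, of y] y y_eq \<open>q \<in> \<rat>\<close> by auto
  ultimately have "q = 0 \<and> r = 1"
    by (intro dss_poly_affine_coefficients_eq_0[OF l]) (simp_all add: a2_def a1_def a0_def)
  with y_eq \<open>x \<noteq> y\<close> show False
    by simp
qed

lemma dss_poly_roots_int_independent:
  assumes l: "l \<ge> 1" and x: "dss_poly l x = 0" and y: "dss_poly l y = 0" and "x \<noteq> y"
    and relation: "of_int A * x + of_int B * y + of_int C = 0"
  shows "A = 0 \<and> B = 0 \<and> C = 0"
proof (cases "B = 0")
  case False
  with relation have "y = - of_int C / of_int B + - of_int A / of_int B * x"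
    by (simp add: field_simps)
  moreover have "- of_int C / of_int B \<in> \<rat>" "- of_int A / of_int B \<in> \<rat>"
    by simp_all
  ultimately show ?thesis
    using dss_poly_roots_not_rat_affine[OF l x y \<open>x \<noteq> y\<close>] by blast
next
  case True
  have "x \<notin> \<rat>"
    using dss_poly_no_rational_root[OF l] x by blast
  with relation True show ?thesis
    using irrational_rat_linear_eq_0[of x "of_int A" "of_int C"] by simp
qed

lemma dss_poly_roots_phase_sequence:
  assumes "l \<ge> 1" "dss_poly l x = 0" "dss_poly l y = 0" "x \<noteq> y"
  obtains \<tau> :: "nat \<Rightarrow> real"
  where "\<And>k. \<exists>n::int. \<tau> k = (4 * of_int n - 1) * pi / 2"
    and "\<And>t. t \<in> {x, y, 1 - x - y} \<Longrightarrow> (\<lambda>k. exp (\<i> * of_real (\<tau> k * t))) \<longlonglongrightarrow> \<i>"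
proof -
  have "of_int A * x + of_int B * y + of_int C = 0 \<Longrightarrow> A = 0 \<and> B = 0 \<and> C = 0" for A B C
    by (rule dss_poly_roots_int_independent[OF assms])
  then obtain K m n :: "nat \<Rightarrow> int"
    where approx_x: "(\<lambda>k. of_int (K k) * x - of_int (m k) - (x + 1) / 4) \<longlonglongrightarrow> 0"
      and approx_y: "(\<lambda>k. of_int (K k) * y - of_int (n k) - (y + 1) / 4) \<longlonglongrightarrow> 0"
    by (rule Kronecker_pair_sequence)
  define \<tau> where "\<tau> k = (4 * of_int (K k) - 1) * pi / 2" for k
  have phase_x: "(\<lambda>k. exp (\<i> * of_real (\<tau> k * x))) \<longlonglongrightarrow> \<i>"
    and phase_y: "(\<lambda>k. exp (\<i> * of_real (\<tau> k * y))) \<longlonglongrightarrow> \<i>"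
    unfolding \<tau>_def by (rule exp_tendsto_i_of_approx[OF approx_x] exp_tendsto_i_of_approx[OF approx_y])+
  moreover have "(\<lambda>k. exp (\<i> * of_real (\<tau> k * (1 - x - y)))) \<longlonglongrightarrow> \<i>"
    using phase_x phase_y
    by (rule exp_tendsto_i_complement[rotated]) (use exp_i_three_quarter_turn in \<open>simp only: \<tau>_def\<close>)
  moreover have "\<exists>n::int. \<tau> k = (4 * of_int n - 1) * pi / 2" for k
    by (auto simp: \<tau>_def)
  ultimately show ?thesis
    by (intro that) auto
qed

section \<open>Eigenvectors of the double subdivided star\<close>

lemma mem_dss_vertices:
  "y \<in> dss_vertices l m \<longleftrightarrow>
     (case y of Cen s \<Rightarrow> True
      | Mid s i \<Rightarrow> i < (if s then m else l)
      | Leaf s i \<Rightarrow> i < (if s then m else l))"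
  by (cases y) (auto simp: dss_vertices_def)

lemma finite_dss_vertices: "finite (dss_vertices l m)"
  by (simp add: dss_vertices_def)

lemma dss_neighbours:
  assumes "y \<in> dss_vertices l m"
  shows "dss_vertices l m \<inter> {z. dss_edge y z} =
     (case y of Cen s \<Rightarrow> insert (Cen (\<not> s)) (Mid s ` {..<(if s then m else l)})
      | Mid s i \<Rightarrow> {Cen s, Leaf s i}
      | Leaf s i \<Rightarrow> {Mid s i})" (is "?lhs = ?rhs")
proof (rule set_eqI)
  show "z \<in> ?lhs \<longleftrightarrow> z \<in> ?rhs" for z
    using assms by (cases y; cases z) (auto simp: mem_dss_vertices)
qed

lemma dss_adj_sum:
  fixes f :: "dsvtx \<Rightarrow> complex"
  assumes y: "y \<in> dss_vertices l m"
  shows "(\<Sum>z\<in>dss_vertices l m. dss_adj l m y z * f z) =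
     (case y of Cen s \<Rightarrow> f (Cen (\<not> s)) + (\<Sum>i<(if s then m else l). f (Mid s i))
      | Mid s i \<Rightarrow> f (Cen s) + f (Leaf s i)
      | Leaf s i \<Rightarrow> f (Mid s i))"
proof -
  have "(\<Sum>z\<in>dss_vertices l m. dss_adj l m y z * f z) = sum f (dss_vertices l m \<inter> {z. dss_edge y z})"
    by (simp add: dss_adj_def y of_bool_def[symmetric] finite_dss_vertices)
  also have "\<dots> = (case y of Cen s \<Rightarrow> f (Cen (\<not> s)) + (\<Sum>i<(if s then m else l). f (Mid s i))
      | Mid s i \<Rightarrow> f (Cen s) + f (Leaf s i)
      | Leaf s i \<Rightarrow> f (Mid s i))"
    unfolding dss_neighbours[OF y] by (cases y) (auto simp: sum.insert sum.reindex inj_on_def image_iff)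
  finally show ?thesis .
qed

fun dss_side :: "dsvtx \<Rightarrow> bool" where
  "dss_side (Cen s) = s"
| "dss_side (Mid s _) = s"
| "dss_side (Leaf s _) = s"

fun dss_profile :: "real \<Rightarrow> dsvtx \<Rightarrow> real" where
  "dss_profile \<mu> (Cen _) = \<mu>\<^sup>2 - 1"
| "dss_profile \<mu> (Mid _ _) = \<mu>"
| "dss_profile \<mu> (Leaf _ _) = 1"

definition dss_eigvec :: "bool \<Rightarrow> real \<Rightarrow> dsvtx \<Rightarrow> complex" where
  "dss_eigvec anti \<mu> v = of_real ((if anti \<and> dss_side v then - 1 else 1) * dss_profile \<mu> v)"

lemma dss_adj_eigvec:
  assumes root: "dss_poly l (if anti then - \<mu> else \<mu>) = 0" and y: "y \<in> dss_vertices l l"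
  shows "(\<Sum>z\<in>dss_vertices l l. dss_adj l l y z * dss_eigvec anti \<mu> z) = of_real \<mu> * dss_eigvec anti \<mu> y"
proof -
  define sg :: "bool \<Rightarrow> real" where "sg s = (if anti \<and> s then - 1 else 1)" for s
  have cen: "sg (\<not> s) * (\<mu>\<^sup>2 - 1) + real l * (sg s * \<mu>) = \<mu> * (sg s * (\<mu>\<^sup>2 - 1))" for s
    using root by (cases anti; cases s) (simp_all add: sg_def dss_poly_def algebra_simps power2_eq_square power3_eq_cube)
  have mid: "sg s * (\<mu>\<^sup>2 - 1) + sg s = \<mu> * (sg s * \<mu>)" for s
    by (simp add: algebra_simps power2_eq_square)
  have eigvec: "dss_eigvec anti \<mu> v = of_real (sg (dss_side v) * dss_profile \<mu> v)" for v
    by (simp add: dss_eigvec_def sg_def)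
  show ?thesis
  proof (cases y)
    case (Cen s)
    show ?thesis
      using y arg_cong[OF cen[of s], of complex_of_real] by (simp add: Cen dss_adj_sum eigvec)
  next
    case (Mid s i)
    show ?thesis
      using y arg_cong[OF mid[of s], of complex_of_real] by (simp add: Mid dss_adj_sum eigvec)
  next
    case (Leaf s i)
    show ?thesis
      using y by (simp add: Leaf dss_adj_sum eigvec mult.commute)
  qed
qed

(* The weights w extract the leading coefficient of quadratics on R; for a three-point set R
   they are the weights 1 / (prod z in R - {x}. x - z) of the second divided difference. *)
lemma dss_center_expansion:
  assumes weights: "\<And>\<alpha> \<beta> \<gamma>. (\<Sum>x\<in>R. w x * (\<alpha> * x\<^sup>2 + \<beta> * x + \<gamma>)) = \<alpha>"
  shows "(\<Sum>(anti, x)\<in>UNIV \<times> R. of_real (w x / 2) * (if anti \<and> s then - 1 else 1)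
            * dss_eigvec anti (if anti then - x else x) y) = (if y = Cen s then 1 else 0)"
proof -
  define \<sigma> :: real where "\<sigma> = (if s = dss_side y then 1 else - 1)"
  define q where "q x = w x * ((dss_profile x y + \<sigma> * dss_profile (- x) y) / 2)" for x
  have "(\<Sum>(anti, x)\<in>UNIV \<times> R. of_real (w x / 2) * (if anti \<and> s then - 1 else 1)
            * dss_eigvec anti (if anti then - x else x) y) = of_real (sum q R)"
    unfolding sum.cartesian_product[symmetric]
    by (simp add: UNIV_bool dss_eigvec_def \<sigma>_def q_def sum.distrib[symmetric] algebra_simps add_divide_distrib diff_divide_distrib)
  also have "sum q R = (if y = Cen s then 1 else 0)"
  proof (cases y)
    case (Cen s')
    have "sum q R = (\<Sum>x\<in>R. w x * ((1 + \<sigma>) / 2 * x\<^sup>2 + 0 * x + - (1 + \<sigma>) / 2))"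
      unfolding q_def by (intro sum.cong refl) (simp add: Cen field_simps)
    then show ?thesis by (simp only: weights) (simp add: Cen \<sigma>_def)
  next
    case (Mid s' i)
    have "sum q R = (\<Sum>x\<in>R. w x * (0 * x\<^sup>2 + (1 - \<sigma>) / 2 * x + 0))"
      unfolding q_def by (intro sum.cong refl) (simp add: Mid field_simps)
    then show ?thesis by (simp only: weights) (simp add: Mid)
  next
    case (Leaf s' i)
    have "sum q R = (\<Sum>x\<in>R. w x * (0 * x\<^sup>2 + 0 * x + (1 + \<sigma>) / 2))"
      unfolding q_def by (intro sum.cong refl) (simp add: Leaf field_simps)
    then show ?thesis by (simp only: weights) (simp add: Leaf)
  qed
  finally show ?thesis by simp
qed

lemma dss_trans_mat_center_column:
  assumes roots: "\<And>x. x \<in> R \<Longrightarrow> dss_poly l x = 0"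
    and weights: "\<And>\<alpha> \<beta> \<gamma>. (\<Sum>x\<in>R. w x * (\<alpha> * x\<^sup>2 + \<beta> * x + \<gamma>)) = \<alpha>"
    and y: "y \<in> dss_vertices l l"
  shows "trans_mat (dss_vertices l l) (dss_adj l l) t y (Cen False)
    = (\<Sum>(anti, x)\<in>UNIV \<times> R. of_real (w x / 2) * exp (\<i> * of_real (t * (if anti then - x else x)))
          * dss_eigvec anti (if anti then - x else x) y)"
proof -
  define \<mu> :: "bool \<times> real \<Rightarrow> real" where "\<mu> j = (if fst j then - snd j else snd j)" for j
  have "trans_mat (dss_vertices l l) (dss_adj l l) t y (Cen False)
    = (\<Sum>j\<in>UNIV \<times> R. of_real (w (snd j) / 2) * exp (\<i> * of_real t * of_real (\<mu> j))
          * dss_eigvec (fst j) (\<mu> j) y)"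
  proof (rule trans_mat_eigen_expansion[OF _ _ y])
    show "(\<Sum>z\<in>dss_vertices l l. dss_adj l l x z * dss_eigvec (fst j) (\<mu> j) z)
        = of_real (\<mu> j) * dss_eigvec (fst j) (\<mu> j) x"
      if "j \<in> UNIV \<times> R" "x \<in> dss_vertices l l" for j x
      by (rule dss_adj_eigvec) (use that roots in \<open>auto simp: \<mu>_def\<close>)
    show "(\<Sum>j\<in>UNIV \<times> R. of_real (w (snd j) / 2) * dss_eigvec (fst j) (\<mu> j) x)
        = (if x = Cen False then 1 else 0)" for x
      using dss_center_expansion[OF weights, of False x] by (simp add: \<mu>_def case_prod_beta)
  qed
  then show ?thesis
    by (simp add: \<mu>_def case_prod_beta mult_ac)
qed

lemma dss_pgst_of_phases:
  fixes w :: "real \<Rightarrow> real" and \<tau> :: "nat \<Rightarrow> real"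
  assumes roots: "\<And>x. x \<in> R \<Longrightarrow> dss_poly l x = 0"
    and weights: "\<And>\<alpha> \<beta> \<gamma>. (\<Sum>x\<in>R. w x * (\<alpha> * x\<^sup>2 + \<beta> * x + \<gamma>)) = \<alpha>"
    and phases: "\<And>x. x \<in> R \<Longrightarrow> (\<lambda>k. exp (\<i> * of_real (\<tau> k * x))) \<longlonglongrightarrow> \<i>"
  shows "pgst_along (dss_vertices l l) (dss_adj l l) (Cen False) (Cen True) \<tau> \<i>"
  unfolding pgst_along_def
proof
  fix y assume y: "y \<in> dss_vertices l l"
  have phase: "(\<lambda>k. of_real (w x / 2) * exp (\<i> * of_real (\<tau> k * (if anti then - x else x)))
          * dss_eigvec anti (if anti then - x else x) y)
      \<longlonglongrightarrow> of_real (w x / 2) * (\<i> * (if anti \<and> True then - 1 else 1))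
          * dss_eigvec anti (if anti then - x else x) y" if "x \<in> R" for anti x
  proof (intro tendsto_mult tendsto_const, cases anti)
    case True
    have "(\<lambda>k. inverse (exp (\<i> * of_real (\<tau> k * x)))) \<longlonglongrightarrow> inverse \<i>"
      using phases[OF that] by (rule tendsto_inverse) simp
    with True show "(\<lambda>k. exp (\<i> * of_real (\<tau> k * (if anti then - x else x))))
        \<longlonglongrightarrow> \<i> * (if anti \<and> True then - 1 else 1)"
      by (simp add: exp_minus[symmetric])
  qed (use phases[OF that] in simp)
  have column: "trans_mat (dss_vertices l l) (dss_adj l l) t y (Cen False)
    = (\<Sum>(anti, x)\<in>UNIV \<times> R. of_real (w x / 2) * exp (\<i> * of_real (t * (if anti then - x else x)))
          * dss_eigvec anti (if anti then - x else x) y)" for t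
    by (intro dss_trans_mat_center_column roots weights y)
  have "(\<lambda>k. trans_mat (dss_vertices l l) (dss_adj l l) (\<tau> k) y (Cen False))
      \<longlonglongrightarrow> (\<Sum>(anti, x)\<in>UNIV \<times> R. of_real (w x / 2) * (\<i> * (if anti \<and> True then - 1 else 1))
          * dss_eigvec anti (if anti then - x else x) y)"
    unfolding column split_def by (intro tendsto_sum phase) auto
  also have "(\<Sum>(anti, x)\<in>UNIV \<times> R. of_real (w x / 2) * (\<i> * (if anti \<and> True then - 1 else 1))
          * dss_eigvec anti (if anti then - x else x) y)
      = \<i> * (\<Sum>(anti, x)\<in>UNIV \<times> R. of_real (w x / 2) * (if anti \<and> True then - 1 else 1)
          * dss_eigvec anti (if anti then - x else x) y)"
    by (simp add: sum_distrib_left split_def mult_ac)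
  also have "\<dots> = (if y = Cen True then \<i> else 0)"
    by (simp only: dss_center_expansion[OF weights]) simp
  finally show "(\<lambda>k. trans_mat (dss_vertices l l) (dss_adj l l) (\<tau> k) y (Cen False))
      \<longlonglongrightarrow> (if y = Cen True then \<i> else 0)" .
qed

theorem theorem3p2:
  fixes l :: nat
  assumes "l \<ge> 1"
  shows "\<exists>(\<tau> :: nat \<Rightarrow> real) (\<gamma> :: complex).
           (\<forall>k. \<exists>n::int. \<tau> k = (4 * of_int n - 1) * pi / 2) \<and>
           pgst_along (dss_vertices l l) (dss_adj l l) (Cen False) (Cen True) \<tau> \<gamma>"
proof -
  obtain x y z where "x < y" "y < z" and roots: "dss_poly l x = 0" "dss_poly l y = 0" "dss_poly l z = 0"
    using dss_poly_three_roots[OF assms] by blast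
  then have z: "z = 1 - x - y"
    using monic_cubic_distinct_roots_sum[of x "- 1" "- (real l + 1)" 1 y z]
    by (simp add: dss_poly_def algebra_simps)
  obtain \<tau> where \<tau>: "\<And>k. \<exists>n::int. \<tau> k = (4 * of_int n - 1) * pi / 2"
    and phases: "\<And>t. t \<in> {x, y, z} \<Longrightarrow> (\<lambda>k. exp (\<i> * of_real (\<tau> k * t))) \<longlonglongrightarrow> \<i>"
    by (rule dss_poly_roots_phase_sequence[OF assms roots(1,2)]) (use \<open>x < y\<close> z in auto)
  have weights: "(\<Sum>t\<in>{x, y, z}. 1 / (\<Prod>s\<in>{x, y, z} - {t}. t - s) * (\<alpha> * t\<^sup>2 + \<beta> * t + \<gamma>)) = \<alpha>"
    for \<alpha> \<beta> \<gamma>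
    using \<open>x < y\<close> \<open>y < z\<close> by (intro divided_difference_quadratic) simp_all
  have "pgst_along (dss_vertices l l) (dss_adj l l) (Cen False) (Cen True) \<tau> \<i>"
    using roots phases
    by (intro dss_pgst_of_phases[where R = "{x, y, z}" and w = "\<lambda>t. 1 / (\<Prod>s\<in>{x, y, z} - {t}. t - s)"]
        weights) auto
  with \<tau> show ?thesis
    by blast
qed

end
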